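(* Let $(\Omega,\Sigma,\mathbb{P}_0)$ be a probability space, $\mathbb{L}^2=\mathbb{L}^2(\Omega,\Sigma,\mathbb{P}_0)$, and $n\ge 1$ an integer. The functional $\mathrm{MAXVAR}_n:\mathbb{L}^2\to\mathbb{R}$, $\mathrm{MAXVAR}_n(X)=\mathbb{E}(\max\{X_1,\dots,X_n\})$ where $X_1,\dots,X_n$ are i.i.d. copies of $X$, is a coherent risk measure in the basic sense, i.e. it satisfies: (A1) $\mathrm{MAXVAR}_n(C)=C$ for every constant $C$; (A2) $\mathrm{MAXVAR}_n(\lambda X+(1-\lambda)Y)\le \lambda\,\mathrm{MAXVAR}_n(X)+(1-\lambda)\,\mathrm{MAXVAR}_n(Y)$ for all $X,Y\in\mathbb{L}^2$ and $\lambda\in[0,1]$; (A3) $\mathrm{MAXVAR}_n(X)\le\mathrm{MAXVAR}_n(Y)$ whenever $X,Y\in\mathbb{L}^2$ and $X\le Y$; (A4) if $\|X^k-X\|_2\to0$ and $\mathrm{MAXVAR}_n(X^k)\le 0$ for all $k\in\mathbb{N}$, then $\mathrm{MAXVAR}_n(X)\le0$; (A5) $\mathrm{MAXVAR}_n(\lambda X)=\lambda\,\mathrm{MAXVAR}_n(X)$ for all $\lambda>0$ and $X\in\mathbb{L}^2$.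
   Context: $\mathbb{L}^2$ is the space of square-integrable random variables on $(\Omega,\Sigma,\mathbb{P}_0)$ with norm $\|\cdot\|_2$. "i.i.d. copies of $X$" means independent random variables each having the same distribution as $X$; the value $\mathbb{E}(\max\{X_1,\dots,X_n\})$ depends only on the distribution of $X$, so $\mathrm{MAXVAR}_n$ is well defined (and finite on $\mathbb{L}^2$). *)

theory Defs
  imports "HOL-Probability.Probability"
begin

definition L2 :: "'a measure \<Rightarrow> ('a \<Rightarrow> real) set" where
  "L2 M = {X. X \<in> borel_measurable M \<and> integrable M (\<lambda>\<omega>. (X \<omega>)\<^sup>2)}"

definition L2_norm :: "'a measure \<Rightarrow> ('a \<Rightarrow> real) \<Rightarrow> real" where
  "L2_norm M X = sqrt (\<integral>\<omega>. (X \<omega>)\<^sup>2 \<partial>M)"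

text \<open>MAXVAR_n(X) = E(max{X_1,...,X_n}) with X_1..X_n i.i.d. copies of X:
  the joint law of n i.i.d. copies is the n-fold product of the law of X.\<close>
definition maxvar :: "nat \<Rightarrow> 'a measure \<Rightarrow> ('a \<Rightarrow> real) \<Rightarrow> real" where
  "maxvar n M X = (\<integral>x. Max (x ` {..<n}) \<partial>(PiM {..<n} (\<lambda>_. distr M borel X)))"

end

theory Submission
  imports Defs
begin

text \<open>Writing the \<open>n\<close> i.i.d. copies as the coordinates of the product space \<open>M\<^sup>n\<close>,
  \<open>MAXVAR\<^sub>n(X)\<close> is the expectation of \<open>max\<^sub>i X(\<omega>\<^sub>i)\<close>. All five properties then hold pointwise
  for the maximum of finitely many reals and survive integration: the maximum is convex,
  monotone, positively homogeneous and fixes constants, and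
  \<open>max\<^sub>i a\<^sub>i - max\<^sub>i b\<^sub>i \<le> \<Sum>\<^sub>i \<bar>a\<^sub>i - b\<^sub>i\<bar>\<close>, so \<open>MAXVAR\<^sub>n\<close> is \<open>n\<close>-Lipschitz for the \<open>L\<^sup>1\<close>
  norm and hence continuous for the \<open>L\<^sup>2\<close> norm.\<close>

definition max_of_copies :: "nat \<Rightarrow> ('a \<Rightarrow> real) \<Rightarrow> (nat \<Rightarrow> 'a) \<Rightarrow> real" where
  "max_of_copies n X \<omega> = Max ((\<lambda>i. X (\<omega> i)) ` {..<n})"

lemma Max_image_mono:
  fixes a b :: "'i \<Rightarrow> 'b::linorder"
  assumes "finite I" "I \<noteq> {}" "\<And>i. i \<in> I \<Longrightarrow> a i \<le> b i"
  shows "Max (a ` I) \<le> Max (b ` I)"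
proof -
  have "a i \<le> Max (b ` I)" if "i \<in> I" for i
    using assms(3)[OF that] Max_ge[OF finite_imageI[OF assms(1)] imageI[OF that]]
    by (rule order_trans)
  then show ?thesis using assms by (subst Max_le_iff) auto
qed

lemma Max_image_convex_le:
  fixes a b :: "'i \<Rightarrow> real"
  assumes "finite I" "I \<noteq> {}" "0 \<le> t" "t \<le> 1"
  shows "Max ((\<lambda>i. t * a i + (1 - t) * b i) ` I) \<le> t * Max (a ` I) + (1 - t) * Max (b ` I)"
proof -
  have "t * a i + (1 - t) * b i \<le> t * Max (a ` I) + (1 - t) * Max (b ` I)" if "i \<in> I" for i
  proof -
    have "a i \<le> Max (a ` I)" "b i \<le> Max (b ` I)" using that assms by auto
    then show ?thesis using assms by (intro add_mono mult_left_mono) auto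
  qed
  then show ?thesis using assms by (subst Max_le_iff) auto
qed

lemma Max_image_diff_le_sum_abs:
  fixes a b :: "'i \<Rightarrow> real"
  assumes "finite I" "I \<noteq> {}"
  shows "Max (a ` I) - Max (b ` I) \<le> (\<Sum>i\<in>I. \<bar>b i - a i\<bar>)"
proof -
  have "Max (a ` I) \<in> a ` I" using assms by (intro Max_in) auto
  then obtain j where j: "j \<in> I" "Max (a ` I) = a j" by auto
  have "b j \<le> Max (b ` I)" using j assms by auto
  moreover have "\<bar>b j - a j\<bar> \<le> (\<Sum>i\<in>I. \<bar>b i - a i\<bar>)"
    by (rule member_le_sum) (use assms j in auto)
  ultimately show ?thesis using j by simp
qed

lemma abs_Max_image_le_sum_abs:
  fixes a :: "'i \<Rightarrow> real"
  assumes "finite I" "I \<noteq> {}"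
  shows "\<bar>Max (a ` I)\<bar> \<le> (\<Sum>i\<in>I. \<bar>a i\<bar>)"
proof -
  have "Max (a ` I) \<in> a ` I" using assms by (intro Max_in) auto
  then obtain j where j: "j \<in> I" "Max (a ` I) = a j" by auto
  have "\<bar>a j\<bar> \<le> (\<Sum>i\<in>I. \<bar>a i\<bar>)" by (rule member_le_sum) (use assms j in auto)
  then show ?thesis using j by simp
qed

lemma integral_abs_le_L2_norm:
  fixes Z :: "'a \<Rightarrow> real"
  assumes "prob_space M" and [measurable]: "Z \<in> borel_measurable M"
    and Z2: "integrable M (\<lambda>x. (Z x)\<^sup>2)"
  shows "(\<integral>x. \<bar>Z x\<bar> \<partial>M) \<le> L2_norm M Z"
proof -
  interpret prob_space M by fact
  have "integrable M Z" using square_integrable_imp_integrable[OF _ Z2] by simp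
  then have "variance (\<lambda>x. \<bar>Z x\<bar>) = expectation (\<lambda>x. (Z x)\<^sup>2) - (expectation (\<lambda>x. \<bar>Z x\<bar>))\<^sup>2"
    using variance_eq[of "\<lambda>x. \<bar>Z x\<bar>"] Z2 by simp
  then have "(expectation (\<lambda>x. \<bar>Z x\<bar>))\<^sup>2 \<le> expectation (\<lambda>x. (Z x)\<^sup>2)"
    using variance_positive[of "\<lambda>x. \<bar>Z x\<bar>"] by simp
  then show ?thesis unfolding L2_norm_def by (rule real_le_rsqrt)
qed

lemma L2_imp_integrable:
  assumes "prob_space M" "X \<in> L2 M"
  shows "integrable M X"
proof -
  interpret prob_space M by fact
  show ?thesis using square_integrable_imp_integrable assms(2) by (auto simp: L2_def)
qed

lemma L2_diff:
  assumes "X \<in> L2 M" "Y \<in> L2 M"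
  shows "(\<lambda>\<omega>. X \<omega> - Y \<omega>) \<in> L2 M"
proof -
  have [measurable]: "X \<in> borel_measurable M" "Y \<in> borel_measurable M"
    and X2: "integrable M (\<lambda>\<omega>. (X \<omega>)\<^sup>2)" and Y2: "integrable M (\<lambda>\<omega>. (Y \<omega>)\<^sup>2)"
    using assms by (auto simp: L2_def)
  have "integrable M (\<lambda>\<omega>. (X \<omega> - Y \<omega>)\<^sup>2)"
  proof (rule Bochner_Integration.integrable_bound)
    show "integrable M (\<lambda>\<omega>. 2 * (X \<omega>)\<^sup>2 + 2 * (Y \<omega>)\<^sup>2)" using X2 Y2 by simp
    show "AE \<omega> in M. norm ((X \<omega> - Y \<omega>)\<^sup>2) \<le> norm (2 * (X \<omega>)\<^sup>2 + 2 * (Y \<omega>)\<^sup>2)"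
    proof (rule AE_I2)
      fix \<omega>
      have "(X \<omega> - Y \<omega>)\<^sup>2 \<le> 2 * (X \<omega>)\<^sup>2 + 2 * (Y \<omega>)\<^sup>2"
        using sum_squares_ge_zero[of "X \<omega> + Y \<omega>" 0] by (simp add: power2_eq_square algebra_simps)
      then show "norm ((X \<omega> - Y \<omega>)\<^sup>2) \<le> norm (2 * (X \<omega>)\<^sup>2 + 2 * (Y \<omega>)\<^sup>2)" by simp
    qed
  qed measurable
  then show ?thesis by (simp add: L2_def)
qed

lemma
  fixes h :: "'a \<Rightarrow> 'b::{banach, second_countable_topology}"
  assumes "prob_space M" "i \<in> I" "finite I" and h[measurable]: "h \<in> borel_measurable M"
  shows integrable_PiM_component_iff:
      "integrable (PiM I (\<lambda>_. M)) (\<lambda>\<omega>. h (\<omega> i)) \<longleftrightarrow> integrable M h"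
    and integral_PiM_component:
      "(\<integral>\<omega>. h (\<omega> i) \<partial>PiM I (\<lambda>_. M)) = (\<integral>x. h x \<partial>M)"
proof -
  have distr: "distr (PiM I (\<lambda>_. M)) M (\<lambda>\<omega>. \<omega> i) = M"
    using distr_PiM_component[of I "\<lambda>_. M" i] assms by simp
  have meas: "(\<lambda>\<omega>. \<omega> i) \<in> measurable (PiM I (\<lambda>_. M)) M"
    using measurable_component_singleton[of i I "\<lambda>_. M"] assms by simp
  show "integrable (PiM I (\<lambda>_. M)) (\<lambda>\<omega>. h (\<omega> i)) \<longleftrightarrow> integrable M h"
    using integrable_distr_eq[OF meas h] distr by simp
  show "(\<integral>\<omega>. h (\<omega> i) \<partial>PiM I (\<lambda>_. M)) = (\<integral>x. h x \<partial>M)"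
    using integral_distr[OF meas h] distr by simp
qed

lemma borel_measurable_max_of_copies [measurable]:
  assumes "X \<in> borel_measurable M"
  shows "max_of_copies n X \<in> borel_measurable (PiM {..<n} (\<lambda>_. M))"
  unfolding max_of_copies_def
proof (intro borel_measurable_Max)
  fix i assume "i \<in> {..<n}"
  then show "(\<lambda>\<omega>. X (\<omega> i)) \<in> borel_measurable (PiM {..<n} (\<lambda>_. M))"
    using measurable_compose[OF measurable_component_singleton[of i "{..<n}" "\<lambda>_. M"] assms]
    by simp
qed simp

text \<open>The law of \<open>\<omega> \<mapsto> (X(\<omega>\<^sub>i))\<^sub>i\<close> under \<open>M\<^sup>n\<close> is the \<open>n\<close>-fold product of the law of \<open>X\<close>.\<close>

lemma maxvar_eq_integral_max_of_copies:
  assumes M: "prob_space M" and X[measurable]: "X \<in> borel_measurable M"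
  shows "maxvar n M X = (\<integral>\<omega>. max_of_copies n X \<omega> \<partial>PiM {..<n} (\<lambda>_. M))"
proof -
  define D where "D = distr M borel X"
  have "prob_space D" unfolding D_def by (rule prob_space.prob_space_distr[OF M X])
  moreover have [measurable]: "X \<in> measurable M D" unfolding D_def by simp
  moreover have "distr M D X = D"
    by (rule measure_eqI) (simp_all add: D_def emeasure_distr)
  ultimately have law: "distr (PiM {..<n} (\<lambda>_. M)) (PiM {..<n} (\<lambda>_. D)) (compose {..<n} X)
      = PiM {..<n} (\<lambda>_. D)"
    using distr_PiM_finite_prob_space'[of "{..<n}" "\<lambda>_. M" "\<lambda>_. D" X] M by simp
  have compose_meas: "compose {..<n} X \<in> measurable (PiM {..<n} (\<lambda>_. M)) (PiM {..<n} (\<lambda>_. D))"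
    unfolding compose_def by measurable
  have "sets D = sets borel" unfolding D_def by simp
  then have "max_of_copies n (\<lambda>x. x) \<in> borel_measurable (PiM {..<n} (\<lambda>_. D))"
    by (intro borel_measurable_max_of_copies measurable_ident_sets)
  moreover have "max_of_copies n (\<lambda>x. x) = (\<lambda>x. Max (x ` {..<n}))"
    by (rule ext) (simp add: max_of_copies_def)
  ultimately have meas: "(\<lambda>x. Max (x ` {..<n})) \<in> borel_measurable (PiM {..<n} (\<lambda>_. D))"
    by simp
  have "maxvar n M X = (\<integral>x. Max (x ` {..<n}) \<partial>PiM {..<n} (\<lambda>_. D))"
    unfolding maxvar_def D_def ..
  also have "\<dots> = (\<integral>\<omega>. Max (compose {..<n} X \<omega> ` {..<n}) \<partial>PiM {..<n} (\<lambda>_. M))"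
    using integral_distr[OF compose_meas meas] by (simp only: law)
  also have "\<dots> = (\<integral>\<omega>. max_of_copies n X \<omega> \<partial>PiM {..<n} (\<lambda>_. M))"
    by (intro Bochner_Integration.integral_cong refl arg_cong[where f=Max] image_cong)
       (auto simp: compose_def max_of_copies_def)
  finally show ?thesis .
qed

lemma integrable_max_of_copies:
  assumes M: "prob_space M" and "n > 0" and X: "integrable M X"
  shows "integrable (PiM {..<n} (\<lambda>_. M)) (max_of_copies n X)"
proof (rule Bochner_Integration.integrable_bound)
  have [measurable]: "X \<in> borel_measurable M" using X by simp
  show "integrable (PiM {..<n} (\<lambda>_. M)) (\<lambda>\<omega>. \<Sum>i<n. \<bar>X (\<omega> i)\<bar>)"
    using integrable_PiM_component_iff[OF M _ finite_lessThan, of _ n "\<lambda>x. \<bar>X x\<bar>"] X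
    by (intro Bochner_Integration.integrable_sum) auto
  show "max_of_copies n X \<in> borel_measurable (PiM {..<n} (\<lambda>_. M))" by measurable
  show "AE \<omega> in PiM {..<n} (\<lambda>_. M). norm (max_of_copies n X \<omega>) \<le> norm (\<Sum>i<n. \<bar>X (\<omega> i)\<bar>)"
  proof (rule AE_I2)
    fix \<omega>
    have "\<bar>max_of_copies n X \<omega>\<bar> \<le> (\<Sum>i<n. \<bar>X (\<omega> i)\<bar>)"
      unfolding max_of_copies_def using \<open>n > 0\<close> by (intro abs_Max_image_le_sum_abs) auto
    then show "norm (max_of_copies n X \<omega>) \<le> norm (\<Sum>i<n. \<bar>X (\<omega> i)\<bar>)"
      by (simp add: sum_nonneg)
  qed
qed

lemma maxvar_const:
  assumes "prob_space M" "n > 0"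
  shows "maxvar n M (\<lambda>_. C) = C"
proof -
  have const: "max_of_copies n (\<lambda>_. C) = (\<lambda>_. C)"
    using assms(2) by (auto simp: max_of_copies_def image_constant_conv lessThan_empty_iff)
  have "maxvar n M (\<lambda>_. C) = (\<integral>\<omega>. max_of_copies n (\<lambda>_. C) \<omega> \<partial>PiM {..<n} (\<lambda>_. M))"
    by (rule maxvar_eq_integral_max_of_copies[OF assms(1)]) simp
  also have "\<dots> = (\<integral>_. C \<partial>PiM {..<n} (\<lambda>_. M))"
    by (simp only: const)
  also have "\<dots> = C"
  proof -
    interpret prob_space "PiM {..<n} (\<lambda>_. M)" by (intro prob_space_PiM assms(1))
    show ?thesis by (simp add: prob_space)
  qed
  finally show ?thesis .
qed

lemma maxvar_convex:
  assumes M: "prob_space M" and n: "n > 0" and X: "integrable M X" and Y: "integrable M Y"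
    and t: "0 \<le> t" "t \<le> 1"
  shows "maxvar n M (\<lambda>\<omega>. t * X \<omega> + (1 - t) * Y \<omega>) \<le> t * maxvar n M X + (1 - t) * maxvar n M Y"
proof -
  have [measurable]: "X \<in> borel_measurable M" "Y \<in> borel_measurable M" using X Y by simp_all
  have "maxvar n M (\<lambda>\<omega>. t * X \<omega> + (1 - t) * Y \<omega>)
      = (\<integral>\<omega>. max_of_copies n (\<lambda>\<omega>. t * X \<omega> + (1 - t) * Y \<omega>) \<omega> \<partial>PiM {..<n} (\<lambda>_. M))"
    by (rule maxvar_eq_integral_max_of_copies[OF M]) measurable
  also have "\<dots> \<le> (\<integral>\<omega>. t * max_of_copies n X \<omega> + (1 - t) * max_of_copies n Y \<omega> \<partial>PiM {..<n} (\<lambda>_. M))"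
  proof (rule integral_mono)
    show "integrable (PiM {..<n} (\<lambda>_. M)) (max_of_copies n (\<lambda>\<omega>. t * X \<omega> + (1 - t) * Y \<omega>))"
      using X Y by (intro integrable_max_of_copies[OF M n]) auto
    show "integrable (PiM {..<n} (\<lambda>_. M))
        (\<lambda>\<omega>. t * max_of_copies n X \<omega> + (1 - t) * max_of_copies n Y \<omega>)"
      using integrable_max_of_copies[OF M n X] integrable_max_of_copies[OF M n Y] by auto
    fix \<omega>
    show "max_of_copies n (\<lambda>\<omega>. t * X \<omega> + (1 - t) * Y \<omega>) \<omega>
        \<le> t * max_of_copies n X \<omega> + (1 - t) * max_of_copies n Y \<omega>"
      unfolding max_of_copies_def using n t by (intro Max_image_convex_le) auto
  qed
  also have "\<dots> = t * maxvar n M X + (1 - t) * maxvar n M Y"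
    using integrable_max_of_copies[OF M n X] integrable_max_of_copies[OF M n Y]
    by (simp add: maxvar_eq_integral_max_of_copies[OF M])
  finally show ?thesis .
qed

lemma maxvar_mono_AE:
  assumes M: "prob_space M" and n: "n > 0" and X: "integrable M X" and Y: "integrable M Y"
    and le: "AE \<omega> in M. X \<omega> \<le> Y \<omega>"
  shows "maxvar n M X \<le> maxvar n M Y"
proof -
  have [measurable]: "X \<in> borel_measurable M" "Y \<in> borel_measurable M" using X Y by simp_all
  have "AE \<omega> in PiM {..<n} (\<lambda>_. M). \<forall>i\<in>{..<n}. X (\<omega> i) \<le> Y (\<omega> i)"
    by (intro eventually_ball_finite ballI AE_PiM_component[where P="\<lambda>x. X x \<le> Y x"] M le) auto
  then have "AE \<omega> in PiM {..<n} (\<lambda>_. M). max_of_copies n X \<omega> \<le> max_of_copies n Y \<omega>"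
    by eventually_elim (use n in \<open>auto simp: max_of_copies_def intro: Max_image_mono\<close>)
  then show ?thesis
    using integrable_max_of_copies[OF M n X] integrable_max_of_copies[OF M n Y]
    by (simp add: maxvar_eq_integral_max_of_copies[OF M] integral_mono_AE)
qed

text \<open>No integrability is needed: \<open>\<integral>c * f = c * \<integral>f\<close> holds for the Bochner integral even
  when \<open>f\<close> is not integrable.\<close>

lemma maxvar_mult_pos:
  assumes M: "prob_space M" and n: "n > 0" and [measurable]: "X \<in> borel_measurable M"
    and t: "t > 0"
  shows "maxvar n M (\<lambda>\<omega>. t * X \<omega>) = t * maxvar n M X"
proof -
  have "mono ((*) t)" using t by (intro monoI mult_left_mono) auto
  then have "max_of_copies n (\<lambda>\<omega>. t * X \<omega>) \<omega> = t * max_of_copies n X \<omega>" for \<omega>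
    using mono_Max_commute[of "(*) t" "(\<lambda>i. X (\<omega> i)) ` {..<n}"] n
    by (simp add: max_of_copies_def image_image lessThan_empty_iff)
  then show ?thesis by (simp add: maxvar_eq_integral_max_of_copies[OF M])
qed

lemma maxvar_diff_le:
  assumes M: "prob_space M" and n: "n > 0" and X: "integrable M X" and Y: "integrable M Y"
  shows "maxvar n M X - maxvar n M Y \<le> real n * (\<integral>\<omega>. \<bar>Y \<omega> - X \<omega>\<bar> \<partial>M)"
proof -
  have [measurable]: "X \<in> borel_measurable M" "Y \<in> borel_measurable M" using X Y by simp_all
  have dist_copy_integrable: "integrable (PiM {..<n} (\<lambda>_. M)) (\<lambda>\<omega>. \<bar>Y (\<omega> i) - X (\<omega> i)\<bar>)"
    if "i \<in> {..<n}" for i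
    using integrable_PiM_component_iff[OF M that, of "\<lambda>x. \<bar>Y x - X x\<bar>"] X Y by auto
  have "maxvar n M X - maxvar n M Y
      = (\<integral>\<omega>. max_of_copies n X \<omega> - max_of_copies n Y \<omega> \<partial>PiM {..<n} (\<lambda>_. M))"
    using integrable_max_of_copies[OF M n X] integrable_max_of_copies[OF M n Y]
    by (simp add: maxvar_eq_integral_max_of_copies[OF M])
  also have "\<dots> \<le> (\<integral>\<omega>. (\<Sum>i<n. \<bar>Y (\<omega> i) - X (\<omega> i)\<bar>) \<partial>PiM {..<n} (\<lambda>_. M))"
  proof (rule integral_mono)
    show "integrable (PiM {..<n} (\<lambda>_. M)) (\<lambda>\<omega>. max_of_copies n X \<omega> - max_of_copies n Y \<omega>)"
      using integrable_max_of_copies[OF M n X] integrable_max_of_copies[OF M n Y] by auto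
    show "integrable (PiM {..<n} (\<lambda>_. M)) (\<lambda>\<omega>. \<Sum>i<n. \<bar>Y (\<omega> i) - X (\<omega> i)\<bar>)"
      using dist_copy_integrable by auto
    fix \<omega>
    show "max_of_copies n X \<omega> - max_of_copies n Y \<omega> \<le> (\<Sum>i<n. \<bar>Y (\<omega> i) - X (\<omega> i)\<bar>)"
      unfolding max_of_copies_def using n by (intro Max_image_diff_le_sum_abs) auto
  qed
  also have "\<dots> = (\<Sum>i<n. (\<integral>\<omega>. \<bar>Y (\<omega> i) - X (\<omega> i)\<bar> \<partial>PiM {..<n} (\<lambda>_. M)))"
    using dist_copy_integrable by (rule Bochner_Integration.integral_sum)
  also have "\<dots> = real n * (\<integral>\<omega>. \<bar>Y \<omega> - X \<omega>\<bar> \<partial>M)"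
    using integral_PiM_component[OF M _ _, of _ "{..<n}" "\<lambda>x. \<bar>Y x - X x\<bar>"] by simp
  finally show ?thesis .
qed

lemma maxvar_le_add_L2_norm:
  assumes M: "prob_space M" and n: "n > 0" and X: "X \<in> L2 M" and Y: "Y \<in> L2 M"
  shows "maxvar n M X \<le> maxvar n M Y + real n * L2_norm M (\<lambda>\<omega>. Y \<omega> - X \<omega>)"
proof -
  have "(\<lambda>\<omega>. Y \<omega> - X \<omega>) \<in> L2 M" using L2_diff[OF Y X] .
  then have "(\<integral>\<omega>. \<bar>Y \<omega> - X \<omega>\<bar> \<partial>M) \<le> L2_norm M (\<lambda>\<omega>. Y \<omega> - X \<omega>)"
    by (intro integral_abs_le_L2_norm[OF M]) (auto simp: L2_def)
  then have "real n * (\<integral>\<omega>. \<bar>Y \<omega> - X \<omega>\<bar> \<partial>M) \<le> real n * L2_norm M (\<lambda>\<omega>. Y \<omega> - X \<omega>)"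
    by (rule mult_left_mono) simp
  with maxvar_diff_le[OF M n L2_imp_integrable[OF M X] L2_imp_integrable[OF M Y]] show ?thesis
    by linarith
qed

lemma maxvar_nonpos_of_L2_limit:
  assumes M: "prob_space M" and n: "n > 0" and Xs: "\<And>k. Xs k \<in> L2 M" and X: "X \<in> L2 M"
    and lim: "(\<lambda>k. L2_norm M (\<lambda>\<omega>. Xs k \<omega> - X \<omega>)) \<longlonglongrightarrow> 0"
    and nonpos: "\<And>k. maxvar n M (Xs k) \<le> 0"
  shows "maxvar n M X \<le> 0"
proof (rule LIMSEQ_le_const)
  show "(\<lambda>k. real n * L2_norm M (\<lambda>\<omega>. Xs k \<omega> - X \<omega>)) \<longlonglongrightarrow> 0"
    using tendsto_mult_right_zero[OF lim] .
  show "\<exists>N. \<forall>k\<ge>N. maxvar n M X \<le> real n * L2_norm M (\<lambda>\<omega>. Xs k \<omega> - X \<omega>)"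
  proof (intro exI allI impI)
    fix k
    show "maxvar n M X \<le> real n * L2_norm M (\<lambda>\<omega>. Xs k \<omega> - X \<omega>)"
      using maxvar_le_add_L2_norm[OF M n X Xs, of k] nonpos[of k] by linarith
  qed
qed

theorem theorem1:
  fixes M :: "'a measure" and n :: nat
  assumes "prob_space M" and "n \<ge> 1"
  shows "(\<forall>C::real. maxvar n M (\<lambda>_. C) = C)
    \<and> (\<forall>X\<in>L2 M. \<forall>Y\<in>L2 M. \<forall>t::real. 0 \<le> t \<and> t \<le> 1 \<longrightarrow>
          maxvar n M (\<lambda>\<omega>. t * X \<omega> + (1 - t) * Y \<omega>)
            \<le> t * maxvar n M X + (1 - t) * maxvar n M Y)
    \<and> (\<forall>X\<in>L2 M. \<forall>Y\<in>L2 M. (AE \<omega> in M. X \<omega> \<le> Y \<omega>) \<longrightarrow> maxvar n M X \<le> maxvar n M Y)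
    \<and> (\<forall>Xs X. (\<forall>k. Xs k \<in> L2 M) \<and> X \<in> L2 M
          \<and> (\<lambda>k. L2_norm M (\<lambda>\<omega>. Xs k \<omega> - X \<omega>)) \<longlonglongrightarrow> 0
          \<and> (\<forall>k. maxvar n M (Xs k) \<le> 0) \<longrightarrow> maxvar n M X \<le> 0)
    \<and> (\<forall>X\<in>L2 M. \<forall>t::real. t > 0 \<longrightarrow> maxvar n M (\<lambda>\<omega>. t * X \<omega>) = t * maxvar n M X)"
proof -
  note M = assms(1)
  have n: "n > 0" using assms(2) by simp
  note int = L2_imp_integrable[OF M]
  show ?thesis
  proof (intro conjI ballI allI impI)
    fix C :: real
    show "maxvar n M (\<lambda>_. C) = C" by (rule maxvar_const[OF M n])
  next
    fix X Y and t :: real assume "X \<in> L2 M" "Y \<in> L2 M" "0 \<le> t \<and> t \<le> 1"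
    then show "maxvar n M (\<lambda>\<omega>. t * X \<omega> + (1 - t) * Y \<omega>) \<le> t * maxvar n M X + (1 - t) * maxvar n M Y"
      by (intro maxvar_convex[OF M n] int) auto
  next
    fix X Y assume "X \<in> L2 M" "Y \<in> L2 M" "AE \<omega> in M. X \<omega> \<le> Y \<omega>"
    then show "maxvar n M X \<le> maxvar n M Y" by (intro maxvar_mono_AE[OF M n] int)
  next
    fix Xs X assume "(\<forall>k. Xs k \<in> L2 M) \<and> X \<in> L2 M
      \<and> (\<lambda>k. L2_norm M (\<lambda>\<omega>. Xs k \<omega> - X \<omega>)) \<longlonglongrightarrow> 0 \<and> (\<forall>k. maxvar n M (Xs k) \<le> 0)"
    then show "maxvar n M X \<le> 0" using maxvar_nonpos_of_L2_limit[OF M n, of Xs X] by blast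
  next
    fix X and t :: real assume "X \<in> L2 M" "t > 0"
    then show "maxvar n M (\<lambda>\<omega>. t * X \<omega>) = t * maxvar n M X"
      by (intro maxvar_mult_pos[OF M n] borel_measurable_integrable int)
  qed
qed

end
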